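(* Let $a\in\mathbb{C}$ with $2a\notin\{0,-1,-2,\ldots\}$. Then \[ {}_5F_4\!\left(\left.{1,\,1,\,1-2a,\,\frac{7+3a\pm\sqrt{9a^2+2a-1}}{5}\atop \frac32,\,1+2a,\,\frac{2+3a\pm\sqrt{9a^2+2a-1}}{5}}\right|-\frac14\right)=\frac{4a}{1+2a}. \]
   Context: ${}_pF_q\left(\left.{a_1,\ldots,a_p\atop b_1,\ldots,b_q}\right|z\right)=\sum_{n\ge0}\frac{(a_1)_n\cdots(a_p)_n}{(b_1)_n\cdots(b_q)_n}\frac{z^n}{n!}$ with $(x)_n=x(x+1)\cdots(x+n-1)$. A parameter written with $\pm$ stands for the two parameters obtained with $+$ and with $-$. *)

theory Defs
  imports "HOL-Analysis.Analysis"
begin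

definition hypergeom :: "complex list \<Rightarrow> complex list \<Rightarrow> complex \<Rightarrow> complex" where
  "hypergeom as bs z =
     (\<Sum>n. (prod_list (map (\<lambda>a. pochhammer a n) as) / prod_list (map (\<lambda>b. pochhammer b n) bs))
           * z ^ n / fact n)"

end

theory Submission
  imports Defs
begin

text \<open>The two parameters \<open>f, g = (2 + 3a \<plusminus> \<surd>(9a\<^sup>2 + 2a - 1))/5\<close> satisfy
  \<open>5 (n + f)(n + g) = 5n\<^sup>2 + (4 + 6a) n + 1 + 2a\<close>, and each ratio \<open>(f + 1)\<^sub>n / (f)\<^sub>n = (f + n)/f\<close>,
  so the \<open>\<^sub>5F\<^sub>4\<close> series is \<open>\<Sum> t\<^sub>n P(n) / (1 + 2a)\<close> with \<open>t\<^sub>n\<close> the term of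
  \<open>\<^sub>3F\<^sub>2(1, 1, 1 - 2a; 3/2, 1 + 2a; -1/4)\<close> and \<open>P\<close> that quadratic.
  Gosper's algorithm finds the antidifference \<open>G\<^sub>n = 2 (2n + 1)(n + 2a) t\<^sub>n\<close>,
  \<open>G\<^sub>n - G\<^sub>n\<^sub>+\<^sub>1 = t\<^sub>n P(n)\<close>; since \<open>G\<^sub>n\<^sub>+\<^sub>1 / G\<^sub>n \<rightarrow> -1/4\<close>, the series telescopes to
  \<open>G\<^sub>0 / (1 + 2a) = 4a / (1 + 2a)\<close>.\<close>

lemma one_plus_notin_nonpos_Ints: "(x::'a::ring_1) \<notin> \<int>\<^sub>\<le>\<^sub>0 \<Longrightarrow> 1 + x \<notin> \<int>\<^sub>\<le>\<^sub>0"
  using nonpos_Ints_add[OF _ neg_one_in_nonpos_Ints, of "1 + x"] by auto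

lemma pochhammer_plus_one_mult:
  "x * pochhammer (x + 1) n = (x + of_nat n) * pochhammer x n"
  by (metis pochhammer_rec pochhammer_rec')

definition base_term :: "complex \<Rightarrow> nat \<Rightarrow> complex" where
  "base_term a n = fact n * pochhammer (1 - 2 * a) n * (-1/4) ^ n
                     / (pochhammer (3/2) n * pochhammer (1 + 2 * a) n)"

definition antidiff :: "complex \<Rightarrow> nat \<Rightarrow> complex" where
  "antidiff a n = 2 * (2 * of_nat n + 1) * (of_nat n + 2 * a) * base_term a n"

lemma base_term_Suc:
  assumes "2 * a \<notin> \<int>\<^sub>\<le>\<^sub>0"
  shows "4 * (3/2 + of_nat n) * (1 + 2 * a + of_nat n) * base_term a (Suc n)
           = - (of_nat n + 1) * (1 - 2 * a + of_nat n) * base_term a n"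
proof -
  from one_plus_notin_nonpos_Ints[OF assms]
  have "pochhammer (1 + 2 * a) n \<noteq> 0" and d: "1 + 2 * a + of_nat n \<noteq> 0"
    by (auto dest: pochhammer_eq_0_imp_nonpos_Int plus_of_nat_eq_0_imp)
  moreover have "pochhammer (3/2 :: complex) n \<noteq> 0" and c: "3/2 + of_nat n \<noteq> (0 :: complex)"
    by (auto simp: pochhammer_eq_0_iff dest!: arg_cong[where f = Re])
  ultimately have quotient: "base_term a (Suc n)
      = base_term a n * ((of_nat n + 1) * (1 - 2 * a + of_nat n)) * (-1/4)
          / ((3/2 + of_nat n) * (1 + 2 * a + of_nat n))"
    by (simp add: base_term_def pochhammer_rec' field_simps)
  have cancel: "4 * c * d * (B * X * (-1/4) / (c * d)) = - X * B"
    if "c \<noteq> 0" "d \<noteq> 0" for c d B X :: complex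
    using that by (simp add: field_simps)
  show ?thesis
    unfolding quotient cancel[OF c d] by (simp add: algebra_simps)
qed

lemma antidiff_Suc:
  assumes "2 * a \<notin> \<int>\<^sub>\<le>\<^sub>0"
  shows "antidiff a (Suc n) = - (of_nat n + 1) * (of_nat n + 1 - 2 * a) * base_term a n"
proof -
  have "antidiff a (Suc n) = 4 * (3/2 + of_nat n) * (1 + 2 * a + of_nat n) * base_term a (Suc n)"
    by (simp add: antidiff_def algebra_simps)
  then show ?thesis
    using base_term_Suc[OF assms] by (simp add: algebra_simps)
qed

lemma antidiff_diff:
  assumes "2 * a \<notin> \<int>\<^sub>\<le>\<^sub>0"
  shows "antidiff a n - antidiff a (Suc n)
           = (5 * of_nat n ^ 2 + (4 + 6 * a) * of_nat n + 1 + 2 * a) * base_term a n"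
  unfolding antidiff_Suc[OF assms] by (simp add: antidiff_def algebra_simps power2_eq_square)

lemma antidiff_ratio_le:
  assumes two_a: "2 * a \<notin> \<int>\<^sub>\<le>\<^sub>0" and n: "3 + 3 * norm (2 * a) \<le> real n"
  shows "norm (antidiff a (Suc n)) \<le> norm (antidiff a n) / 2"
proof -
  define b where "b = norm (2 * a)"
  have "norm (of_nat n + 1 - 2 * a) \<le> real n + 1 + b"
    using norm_triangle_ineq4[of "of_nat (Suc n) :: complex" "2 * a"]
    unfolding norm_of_nat by (simp add: b_def add.commute)
  moreover have "real n - b \<le> norm (of_nat n + 2 * a)"
    using norm_diff_ineq[of "of_nat n :: complex" "2 * a"] by (simp add: b_def)
  moreover have "(real n + 1) * (real n + 1 + b) \<le> (2 * real n + 1) * (real n - b)"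
  proof -
    have "(3 + 3 * b) * real n \<le> real n * real n"
      using n by (intro mult_right_mono) (auto simp: b_def)
    moreover have "b \<ge> 0" by (simp add: b_def)
    ultimately show ?thesis
      using n unfolding b_def[symmetric] by (simp add: algebra_simps)
  qed
  ultimately have "(real n + 1) * norm (of_nat n + 1 - 2 * a)
                     \<le> (2 * real n + 1) * norm (of_nat n + 2 * a)"
    by (smt (verit, best) mult_left_mono of_nat_0_le_iff)
  then have "norm (antidiff a (Suc n))
               \<le> (2 * real n + 1) * norm (of_nat n + 2 * a) * norm (base_term a n)"
    unfolding antidiff_Suc[OF two_a] norm_mult norm_minus_cancel
    using norm_of_nat[of "Suc n", where 'a = complex]
    by (simp add: mult_right_mono add.commute)
  also have "\<dots> = norm (antidiff a n) / 2"
  proof -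
    have "norm (2 * of_nat n + 1 :: complex) = 2 * real n + 1"
      using norm_of_nat[of "2 * n + 1", where 'a = complex] by (simp add: add.commute)
    then show ?thesis
      unfolding antidiff_def norm_mult by simp
  qed
  finally show ?thesis .
qed

lemma antidiff_tendsto_zero:
  assumes "2 * a \<notin> \<int>\<^sub>\<le>\<^sub>0"
  shows "antidiff a \<longlonglongrightarrow> 0"
proof -
  have "summable (antidiff a)"
  proof (rule summable_ratio_test[of "1/2" "nat \<lceil>3 + 3 * norm (2 * a)\<rceil>"])
    show "norm (antidiff a (Suc n)) \<le> 1/2 * norm (antidiff a n)"
      if "nat \<lceil>3 + 3 * norm (2 * a)\<rceil> \<le> n" for n
      using antidiff_ratio_le[OF assms, of n] that by linarith
  qed simp
  then show ?thesis
    by (rule summable_LIMSEQ_zero)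
qed

lemma base_term_weighted_sums:
  assumes "2 * a \<notin> \<int>\<^sub>\<le>\<^sub>0"
  shows "(\<lambda>n. (5 * of_nat n ^ 2 + (4 + 6 * a) * of_nat n + 1 + 2 * a) * base_term a n) sums (4 * a)"
proof -
  have "(\<lambda>n. antidiff a n - antidiff a (Suc n)) sums (antidiff a 0 - 0)"
    by (rule telescope_sums'[OF antidiff_tendsto_zero[OF assms]])
  moreover have "antidiff a 0 = 4 * a"
    by (simp add: antidiff_def base_term_def)
  ultimately show ?thesis
    by (simp add: antidiff_diff[OF assms])
qed

lemma shifted_roots_product:
  fixes a s x :: complex
  assumes "s\<^sup>2 = 9 * a\<^sup>2 + 2 * a - 1"
  shows "((2 + 3 * a + s) / 5 + x) * ((2 + 3 * a - s) / 5 + x)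
           = (5 * x\<^sup>2 + (4 + 6 * a) * x + 1 + 2 * a) / 5"
  using assms by (simp add: field_simps power2_eq_square) algebra

lemma hypergeom_summand_eq_base_term:
  assumes "2 * a \<notin> \<int>\<^sub>\<le>\<^sub>0" and f: "f \<notin> \<int>\<^sub>\<le>\<^sub>0" and g: "g \<notin> \<int>\<^sub>\<le>\<^sub>0"
  shows "prod_list (map (\<lambda>c. pochhammer c n) [1, 1, 1 - 2 * a, f + 1, g + 1])
           / prod_list (map (\<lambda>c. pochhammer c n) [3/2, 1 + 2 * a, f, g]) * (-1/4) ^ n / fact n
         = (f + of_nat n) * (g + of_nat n) / (f * g) * base_term a n"
proof -
  have f0: "f \<noteq> 0" and g0: "g \<noteq> 0"
    using f g by auto
  have "pochhammer f n \<noteq> 0" "pochhammer g n \<noteq> 0" "pochhammer (1 + 2 * a) n \<noteq> 0"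
    using f g one_plus_notin_nonpos_Ints[OF assms(1)] by (auto dest: pochhammer_eq_0_imp_nonpos_Int)
  moreover have "pochhammer (3/2 :: complex) n \<noteq> 0"
    by (auto simp: pochhammer_eq_0_iff dest!: arg_cong[where f = Re])
  moreover have shift: "pochhammer (c + 1) n = (c + of_nat n) * pochhammer c n / c"
    if "c \<noteq> 0" for c :: complex
    using pochhammer_plus_one_mult[of c n] that by (simp add: field_simps)
  ultimately show ?thesis
    using f0 g0
    by (simp only: list.map prod_list.Cons prod_list.Nil mult_1_right shift[OF f0] shift[OF g0]
        pochhammer_fact[symmetric]) (simp add: base_term_def field_simps)
qed

theorem corollary10:
  fixes a :: complex
  assumes "2 * a \<notin> \<int>\<^sub>\<le>\<^sub>0"
    and "(2 + 3 * a + csqrt (9 * a\<^sup>2 + 2 * a - 1)) / 5 \<notin> \<int>\<^sub>\<le>\<^sub>0"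
    and "(2 + 3 * a - csqrt (9 * a\<^sup>2 + 2 * a - 1)) / 5 \<notin> \<int>\<^sub>\<le>\<^sub>0"
  shows "hypergeom
           [1, 1, 1 - 2 * a,
            (7 + 3 * a + csqrt (9 * a\<^sup>2 + 2 * a - 1)) / 5,
            (7 + 3 * a - csqrt (9 * a\<^sup>2 + 2 * a - 1)) / 5]
           [3 / 2, 1 + 2 * a,
            (2 + 3 * a + csqrt (9 * a\<^sup>2 + 2 * a - 1)) / 5,
            (2 + 3 * a - csqrt (9 * a\<^sup>2 + 2 * a - 1)) / 5]
           (- 1 / 4)
         = 4 * a / (1 + 2 * a)"
proof -
  define s where "s = csqrt (9 * a\<^sup>2 + 2 * a - 1)"
  define f where "f = (2 + 3 * a + s) / 5"
  define g where "g = (2 + 3 * a - s) / 5"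
  have s2: "s\<^sup>2 = 9 * a\<^sup>2 + 2 * a - 1"
    by (simp add: s_def)
  have shifted: "(f + x) * (g + x) = (5 * x\<^sup>2 + (4 + 6 * a) * x + 1 + 2 * a) / 5" for x
    unfolding f_def g_def by (rule shifted_roots_product[OF s2])
  have "f \<notin> \<int>\<^sub>\<le>\<^sub>0" "g \<notin> \<int>\<^sub>\<le>\<^sub>0"
    using assms(2,3) by (simp_all add: f_def g_def s_def)
  moreover have "1 + 2 * a \<noteq> 0"
    using one_plus_notin_nonpos_Ints[OF assms(1)] by auto
  ultimately have summand: "prod_list (map (\<lambda>c. pochhammer c n) [1, 1, 1 - 2 * a, f + 1, g + 1])
      / prod_list (map (\<lambda>c. pochhammer c n) [3/2, 1 + 2 * a, f, g]) * (-1/4) ^ n / fact n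
    = (5 * of_nat n ^ 2 + (4 + 6 * a) * of_nat n + 1 + 2 * a) * base_term a n / (1 + 2 * a)" for n
    using hypergeom_summand_eq_base_term[OF assms(1), of f g n] shifted[of 0] shifted[of "of_nat n"]
    by (simp add: mult.commute)
  have params: "(7 + 3 * a + s) / 5 = f + 1" "(7 + 3 * a - s) / 5 = g + 1"
    by (simp_all add: f_def g_def field_simps)
  have "(\<lambda>n. (5 * of_nat n ^ 2 + (4 + 6 * a) * of_nat n + 1 + 2 * a) * base_term a n / (1 + 2 * a))
          sums (4 * a / (1 + 2 * a))"
    by (rule sums_divide[OF base_term_weighted_sums[OF assms(1)]])
  then show ?thesis
    unfolding hypergeom_def s_def[symmetric] params f_def[symmetric] g_def[symmetric] summand
    by (simp add: sums_iff)
qed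

end
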